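(* Let $\alpha=(\alpha_1,\dots,\alpha_r)\in\mathbb{T}^r$, $D=\{\alpha_1,\dots,\alpha_r\}$, and suppose $\Lambda(\alpha)$ has a generating set (as a group) in which every generator has even coordinate sum. Then $\mathrm{Md}_{\mathbb{T}}(D)=1/2$. Moreover, if $\alpha\notin\mathbb{Q}^r$ (modulo 1), then no Borel set $A\subset\mathbb{T}$ with $(A-A)\cap D=\emptyset$ satisfies $\mu(A)=1/2$.
   Context: $\mathbb{T}=\mathbb{R}/\mathbb{Z}$ with Haar probability measure $\mu$. $\Lambda(\alpha)=\{n\in\mathbb{Z}^r: n_1\alpha_1+\cdots+n_r\alpha_r=0\text{ in }\mathbb{T}\}$. $\mathrm{Md}_{\mathbb{T}}(D)=\sup\{\mu(A): A\subset\mathbb{T}\text{ Borel},\ (A-A)\cap D=\emptyset\}$. *)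

theory Defs
  imports "HOL-Analysis.Analysis"
begin

text \<open>The circle T = R/Z is modelled by the fundamental domain [0,1) with Lebesgue
  (Borel) measure, which is the Haar probability measure.  A point alpha of T^r is given
  by real representatives alpha 0, ..., alpha (r-1); everything below only depends on them mod 1.\<close>

definition diff_avoids :: "nat \<Rightarrow> (nat \<Rightarrow> real) \<Rightarrow> real set \<Rightarrow> bool" where
  "diff_avoids r \<alpha> A \<longleftrightarrow> (\<forall>x\<in>A. \<forall>y\<in>A. \<forall>i<r. x - y - \<alpha> i \<notin> \<int>)"

definition Md_T :: "nat \<Rightarrow> (nat \<Rightarrow> real) \<Rightarrow> real" where
  "Md_T r \<alpha> = Sup {measure lborel A | A. A \<in> sets borel \<and> A \<subseteq> {0..<1} \<and> diff_avoids r \<alpha> A}"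

definition Lambda :: "nat \<Rightarrow> (nat \<Rightarrow> real) \<Rightarrow> (nat \<Rightarrow> int) set" where
  "Lambda r \<alpha> = {n. (\<forall>i\<ge>r. n i = 0) \<and> (\<Sum>i<r. of_int (n i) * \<alpha> i) \<in> \<int>}"

inductive_set gen_subgroup :: "(nat \<Rightarrow> int) set \<Rightarrow> (nat \<Rightarrow> int) set" for G where
  zero: "(\<lambda>i. 0) \<in> gen_subgroup G"
| gen: "g \<in> G \<Longrightarrow> g \<in> gen_subgroup G"
| diff: "a \<in> gen_subgroup G \<Longrightarrow> b \<in> gen_subgroup G \<Longrightarrow> (\<lambda>i. a i - b i) \<in> gen_subgroup G"

end

theory Submission
  imports Defs
begin

text \<open>
  Upper bound: if \<open>(A - A) \<inter> D = {}\<close> then \<open>A\<close> and \<open>A + \<alpha>\<^sub>1\<close> are disjoint in \<open>T\<close>, so \<open>\<mu>(A) \<le> 1/2\<close>.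

  Lower bound: every integer relation \<open>n \<cdot> \<alpha> \<in> \<int>\<close> has even coordinate sum, so it is also a
  relation for \<open>\<beta> = (1/2, \<dots>, 1/2)\<close>, and a Kronecker-type argument yields \<open>m\<close> with
  \<open>m \<alpha>\<^sub>i\<close> within \<open>\<epsilon>\<close> of \<open>1/2\<close> modulo 1. The set of \<open>x\<close> with \<open>m x mod 1 < 1/2 - \<epsilon>\<close> then
  avoids \<open>D\<close> and has measure \<open>1/2 - \<epsilon>\<close>. The Kronecker step averages
  \<open>\<Prod>\<^sub>i cos\<^sup>2\<^sup>K (\<pi>(m \<alpha>\<^sub>i - \<beta>\<^sub>i))\<close> over \<open>m\<close>: only the frequencies that are integer relations survive,
  so the mean is at least \<open>(2K+1)\<^sup>-\<^sup>r\<close>, whereas it would be at most \<open>\<rho>\<^sup>K\<close> with \<open>\<rho> < 1\<close> if some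
  coordinate stayed away from its target.

  No extremal set: if \<open>\<mu>(A) = 1/2\<close> then \<open>A + \<alpha>\<^sub>1\<close> is a.e. the complement of \<open>A\<close>, hence
  \<open>A + 2k\<alpha>\<^sub>1 \<subseteq> A\<close> a.e. and \<open>A \<inter> (A + (2k+1)\<alpha>\<^sub>1)\<close> is null. For irrational \<open>\<alpha>\<^sub>1\<close> the shifts
  \<open>(2k+1)\<alpha>\<^sub>1\<close> come arbitrarily close to integers, contradicting Steinhaus' theorem that
  \<open>\<mu>(A \<inter> (A + t)) > 0\<close> for all small \<open>t\<close>.
\<close>

lemma cos_power_exp_expansion:
  fixes x :: real and K :: nat
  shows "complex_of_real (cos (pi*x) ^ (2*K)) =
    (\<Sum>j\<le>2*K. complex_of_real (real (2*K choose j) / 4^K) * exp (\<i> * complex_of_real (2*pi*x*(real j - real K))))"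
proof -
  define t where "t = pi * x"
  have c: "complex_of_real (cos t) = (exp (\<i> * of_real t) + exp (- (\<i> * of_real t))) / 2"
    using cos_exp_eq[of "of_real t"] by (simp add: cos_of_real)
  have "complex_of_real (cos t ^ (2*K)) = (exp (\<i> * of_real t) + exp (- (\<i> * of_real t)))^(2*K) / 2^(2*K)"
    by (simp add: c power_divide)
  also have "\<dots> = (\<Sum>j\<le>2*K. of_nat (2*K choose j) * exp (\<i> * of_real t)^j * exp (- (\<i> * of_real t))^(2*K-j)) / 2^(2*K)"
    by (simp add: binomial_ring)
  also have "\<dots> = (\<Sum>j\<le>2*K. complex_of_real (real (2*K choose j) / 4^K) * exp (\<i> * complex_of_real (2*pi*x*(real j - real K))))"
    unfolding sum_divide_distrib
  proof (rule sum.cong[OF refl])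
    fix j assume j: "j \<in> {..2*K}"
    have e: "exp (\<i> * of_real t)^j * exp (- (\<i> * of_real t))^(2*K-j) = exp (\<i> * complex_of_real (2*pi*x*(real j - real K)))"
    proof -
      have "exp (\<i> * of_real t)^j * exp (- (\<i> * of_real t))^(2*K-j)
          = exp (of_nat j * (\<i> * of_real t)) * exp (of_nat (2*K-j) * (- (\<i> * of_real t)))"
        by (simp only: exp_of_nat_mult)
      also have "\<dots> = exp (of_nat j * (\<i> * of_real t) + of_nat (2*K-j) * (- (\<i> * of_real t)))"
        by (simp only: exp_add)
      also have "of_nat j * (\<i> * of_real t) + of_nat (2*K-j) * (- (\<i> * of_real t)) = \<i> * complex_of_real (2*pi*x*(real j - real K))"
        using j by (simp add: t_def of_nat_diff algebra_simps)
      finally show ?thesis .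
    qed
    have "(4::complex)^K = 2^(2*K)" by (simp add: power_mult)
    then show "of_nat (2*K choose j) * exp (\<i> * of_real t)^j * exp (- (\<i> * of_real t))^(2*K-j) / 2^(2*K)
       = complex_of_real (real (2*K choose j) / 4^K) * exp (\<i> * complex_of_real (2*pi*x*(real j - real K)))"
      by (simp add: e mult.assoc)
  qed
  finally show ?thesis by (simp add: t_def)
qed

lemma prod_cos_power_exp_expansion:
  fixes x :: "nat \<Rightarrow> real" and K r :: nat
  shows "complex_of_real (\<Prod>i<r. cos (pi * x i) ^ (2*K)) =
    (\<Sum>g\<in>{..<r} \<rightarrow>\<^sub>E {..2*K}. complex_of_real (\<Prod>i<r. real (2*K choose g i) / 4^K) *
        exp (\<i> * complex_of_real (2*pi * (\<Sum>i<r. x i * (real (g i) - real K)))))"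
proof -
  have "complex_of_real (\<Prod>i<r. cos (pi * x i) ^ (2*K)) = (\<Prod>i<r. complex_of_real (cos (pi * x i) ^ (2*K)))"
    by simp
  also have "\<dots> = (\<Prod>i<r. \<Sum>j\<le>2*K. complex_of_real (real (2*K choose j) / 4^K) * exp (\<i> * complex_of_real (2*pi*x i*(real j - real K))))"
    by (simp only: cos_power_exp_expansion)
  also have "\<dots> = (\<Sum>g\<in>{..<r} \<rightarrow>\<^sub>E {..2*K}. \<Prod>i<r. complex_of_real (real (2*K choose g i) / 4^K) * exp (\<i> * complex_of_real (2*pi*x i*(real (g i) - real K))))"
    by (rule prod_sum_PiE) auto
  also have "\<dots> = (\<Sum>g\<in>{..<r} \<rightarrow>\<^sub>E {..2*K}. complex_of_real (\<Prod>i<r. real (2*K choose g i) / 4^K) *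
        exp (\<i> * complex_of_real (2*pi * (\<Sum>i<r. x i * (real (g i) - real K)))))"
  proof (rule sum.cong[OF refl])
    fix g
    have "exp (\<i> * complex_of_real (2*pi * (\<Sum>i<r. x i * (real (g i) - real K))))
        = exp (\<Sum>i<r. \<i> * complex_of_real (2*pi*x i*(real (g i) - real K)))"
      by (simp add: sum_distrib_left mult.assoc)
    also have "\<dots> = (\<Prod>i<r. exp (\<i> * complex_of_real (2*pi*x i*(real (g i) - real K))))"
      by (simp add: exp_sum)
    finally have E: "exp (\<i> * complex_of_real (2*pi * (\<Sum>i<r. x i * (real (g i) - real K)))) = (\<Prod>i<r. exp (\<i> * complex_of_real (2*pi*x i*(real (g i) - real K))))" .
    show "(\<Prod>i<r. complex_of_real (real (2*K choose g i) / 4^K) * exp (\<i> * complex_of_real (2*pi*x i*(real (g i) - real K))))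
      = complex_of_real (\<Prod>i<r. real (2*K choose g i) / 4^K) *
        exp (\<i> * complex_of_real (2*pi * (\<Sum>i<r. x i * (real (g i) - real K))))"
      by (simp only: E prod.distrib of_real_prod)
  qed
  finally show ?thesis .
qed

lemma cesaro_mean_powers_unit:
  fixes z :: complex
  assumes "norm z = 1"
  shows "(\<lambda>M. (\<Sum>m<M. z^m) / of_nat M) \<longlonglongrightarrow> (if z = 1 then 1 else 0)"
proof (cases "z = 1")
  case True
  have "\<forall>\<^sub>F M in sequentially. (\<Sum>m<M. z^m) / of_nat M = 1"
    using eventually_gt_at_top[of 0] by eventually_elim (simp add: True)
  then show ?thesis using True by (simp add: tendsto_eventually)
next
  case False
  have nz: "norm (1 - z) > 0" using False by simp
  have b: "norm ((\<Sum>m<M. z^m) / of_nat M) \<le> (2 / norm (1 - z)) / real M" for M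
  proof -
    have "norm (\<Sum>m<M. z^m) = norm (1 - z^M) / norm (1 - z)"
      using False by (simp add: sum_gp_strict norm_divide)
    also have "\<dots> \<le> 2 / norm (1 - z)"
    proof -
      have "norm (1 - z^M) \<le> norm (1::complex) + norm (z^M)" by (rule norm_triangle_ineq4)
      also have "\<dots> = 2" using assms by (simp add: norm_power)
      finally show ?thesis using nz by (simp add: divide_right_mono)
    qed
    finally have h: "norm (\<Sum>m<M. z^m) \<le> 2 / norm (1 - z)" .
    show ?thesis using divide_right_mono[OF h, of "real M"] by (simp add: norm_divide)
  qed
  have "(\<lambda>M. (2 / norm (1 - z)) / real M) \<longlonglongrightarrow> 0"
    by (intro tendsto_divide_0[OF tendsto_const] filterlim_at_top_imp_at_infinity filterlim_real_sequentially)
  then have "(\<lambda>M. (\<Sum>m<M. z^m) / of_nat M) \<longlonglongrightarrow> 0"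
    by (rule Lim_null_comparison[rotated]) (use b in \<open>simp only: always_eventually eventually_True\<close>)
  then show ?thesis using False by simp
qed

lemma cos_pi_power2_le_of_dist_Ints:
  fixes x e :: real
  assumes "0 < e" "e \<le> 1/2" "\<And>z::int. \<bar>x - of_int z\<bar> \<ge> e"
  shows "cos (pi*x)^2 \<le> cos (pi*e)^2"
proof -
  define y where "y = x - of_int (round x)"
  have y1: "\<bar>y\<bar> \<le> 1/2"
  proof -
    have "\<bar>y\<bar> \<le> \<bar>x - of_int (floor x)\<bar>" "\<bar>y\<bar> \<le> \<bar>x - of_int (floor x + 1)\<bar>"
      unfolding y_def by (rule round_diff_minimal)+
    moreover have "x - of_int (floor x) \<ge> 0" "x - of_int (floor x + 1) < 0"
      by linarith+
    ultimately show ?thesis by linarith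
  qed
  have y2: "\<bar>y\<bar> \<ge> e" using assms(3)[of "round x"] by (simp add: y_def)
  have sq: "cos t ^ 2 = (1 + cos (2*t)) / 2" for t :: real
    by (simp add: cos_double cos_squared_eq)
  have "cos (2*(pi*x)) = cos (2*pi*y + of_int (round x) * (2 * pi))"
    by (simp add: y_def algebra_simps)
  also have "\<dots> = cos (2*pi*y)"
    using cos.plus_of_int[of "2*pi*y" "round x"] by simp
  also have "\<dots> = cos (2*pi*\<bar>y\<bar>)"
    by (metis abs_mult abs_of_nonneg cos_abs_real mult_nonneg_nonneg pi_ge_zero zero_le_numeral)
  also have "\<dots> \<le> cos (2*(pi*e))"
    by (rule cos_monotone_0_pi_le) (use y1 y2 assms in auto)
  finally show ?thesis unfolding sq by simp
qed

lemma poly_times_geometric_tendsto_0: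
  fixes a b \<rho> :: real
  assumes "0 \<le> \<rho>" "\<rho> < 1"
  shows "(\<lambda>n. (a * real n + b) ^ k * \<rho> ^ n) \<longlonglongrightarrow> 0"
proof -
  define \<sigma> where "\<sigma> = root (Suc k) \<rho>"
  have \<sigma>: "0 \<le> \<sigma>" "\<sigma> < 1"
    using assms by (auto simp: \<sigma>_def real_root_lt_1_iff)
  have \<sigma>_pow: "\<sigma> ^ Suc k = \<rho>"
    unfolding \<sigma>_def by (rule real_root_pow_pos2) (use assms in auto)
  have "(\<lambda>n. a * (real n * \<sigma> ^ n) + b * \<sigma> ^ n) \<longlonglongrightarrow> a * 0 + b * 0"
    using \<sigma> by (intro tendsto_intros powser_times_n_limit_0 LIMSEQ_power_zero) auto
  then have "(\<lambda>n. ((a * real n + b) * \<sigma> ^ n) ^ k * \<sigma> ^ n) \<longlonglongrightarrow> 0 ^ k * 0"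
    using \<sigma> by (intro tendsto_intros LIMSEQ_power_zero) (auto simp: algebra_simps)
  moreover have "((a * real n + b) * \<sigma> ^ n) ^ k * \<sigma> ^ n = (a * real n + b) ^ k * \<rho> ^ n" for n
    by (simp flip: \<sigma>_pow add: power_mult_distrib power_mult[symmetric] mult.commute)
  ultimately show ?thesis by simp
qed

lemma prod_cos_power_le:
  fixes x :: "nat \<Rightarrow> real"
  assumes "i0 < r" "cos (pi * x i0) ^ 2 \<le> \<rho>"
  shows "(\<Prod>i<r. cos (pi * x i) ^ (2*K)) \<le> \<rho> ^ K"
proof -
  have "(\<Prod>i<r. cos (pi * x i) ^ (2*K)) = cos (pi * x i0) ^ (2*K) * (\<Prod>i\<in>{..<r}-{i0}. cos (pi * x i) ^ (2*K))"
    using assms(1) by (simp add: prod.remove)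
  also have "\<dots> \<le> \<rho> ^ K * 1"
  proof (rule mult_mono)
    show "cos (pi * x i0) ^ (2*K) \<le> \<rho> ^ K"
      unfolding power_mult by (rule power_mono) (use assms(2) in auto)
    show "(\<Prod>i\<in>{..<r}-{i0}. cos (pi * x i) ^ (2*K)) \<le> 1"
      by (intro prod_le_1) (simp add: power_mult power_le_one abs_square_le_1 abs_cos_le_one)
    show "0 \<le> \<rho> ^ K"
      using assms(2) by (metis zero_le_power2 order_trans zero_le_power)
  qed (simp add: power_mult prod_nonneg)
  finally show ?thesis by simp
qed

lemma central_binomial_lower_bound: "1 / (2 * real K + 1) \<le> real (2*K choose K) / 4 ^ K"
proof -
  have "(4::nat) ^ K = (\<Sum>j\<le>2*K. 2*K choose j)"
    by (simp add: choose_row_sum power_mult)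
  also have "\<dots> \<le> (\<Sum>j\<le>2*K. 2*K choose K)"
    by (intro sum_mono binomial_maximum')
  finally have "(4::real) ^ K \<le> (2 * real K + 1) * real (2*K choose K)"
    using of_nat_mono[where ?'a=real] by (fastforce simp: algebra_simps)
  then show ?thesis
    by (simp add: field_simps)
qed

lemma cos_power_product_orbit_expansion:
  fixes \<alpha> \<beta> :: "nat \<Rightarrow> real" and r K m :: nat
  defines "\<theta> \<equiv> \<lambda>g. \<Sum>i<r. \<alpha> i * (real (g i) - real K)"
    and "\<phi> \<equiv> \<lambda>g. \<Sum>i<r. \<beta> i * (real (g i) - real K)"
  shows "complex_of_real (\<Prod>i<r. cos (pi * (real m * \<alpha> i - \<beta> i)) ^ (2*K)) =
    (\<Sum>g\<in>{..<r} \<rightarrow>\<^sub>E {..2*K}. complex_of_real (\<Prod>i<r. real (2*K choose g i) / 4^K) *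
       exp (- \<i> * complex_of_real (2*pi * \<phi> g)) * exp (\<i> * complex_of_real (2*pi * \<theta> g)) ^ m)"
  unfolding prod_cos_power_exp_expansion
proof (rule sum.cong[OF refl])
  fix g :: "nat \<Rightarrow> nat"
  have E: "(\<Sum>i<r. (real m * \<alpha> i - \<beta> i) * (real (g i) - real K)) = real m * \<theta> g - \<phi> g"
    by (simp add: \<theta>_def \<phi>_def sum_distrib_left algebra_simps flip: sum_subtractf)
  have "\<i> * complex_of_real (2*pi * (\<Sum>i<r. (real m * \<alpha> i - \<beta> i) * (real (g i) - real K)))
      = - \<i> * complex_of_real (2*pi * \<phi> g) + of_nat m * (\<i> * complex_of_real (2*pi * \<theta> g))"
    unfolding E by (simp add: algebra_simps)
  then show "complex_of_real (\<Prod>i<r. real (2*K choose g i) / 4^K) *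
      exp (\<i> * complex_of_real (2*pi * (\<Sum>i<r. (real m * \<alpha> i - \<beta> i) * (real (g i) - real K))))
    = complex_of_real (\<Prod>i<r. real (2*K choose g i) / 4^K) *
      exp (- \<i> * complex_of_real (2*pi * \<phi> g)) * exp (\<i> * complex_of_real (2*pi * \<theta> g)) ^ m"
    by (simp only: exp_add exp_of_nat_mult mult.assoc)
qed

lemma cos_power_product_mean_tendsto:
  fixes \<alpha> \<beta> :: "nat \<Rightarrow> real" and r K :: nat
  assumes rel: "\<And>n::nat \<Rightarrow> int. (\<Sum>i<r. of_int (n i) * \<alpha> i) \<in> \<int> \<Longrightarrow> (\<Sum>i<r. of_int (n i) * \<beta> i) \<in> \<int>"
  obtains L where "(\<lambda>M. (\<Sum>m<M. \<Prod>i<r. cos (pi * (real m * \<alpha> i - \<beta> i)) ^ (2*K)) / real M) \<longlonglongrightarrow> L"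
    and "(1 / (2 * real K + 1)) ^ r \<le> L"
proof -
  define PI where "PI = {..<r} \<rightarrow>\<^sub>E {..2*K}"
  define c where "c g = (\<Prod>i<r. real (2*K choose g i) / 4^K)" for g :: "nat \<Rightarrow> nat"
  define \<theta> where "\<theta> g = (\<Sum>i<r. \<alpha> i * (real (g i) - real K))" for g :: "nat \<Rightarrow> nat"
  define \<phi> where "\<phi> g = (\<Sum>i<r. \<beta> i * (real (g i) - real K))" for g :: "nat \<Rightarrow> nat"
  define w where "w g = complex_of_real (c g) * exp (- \<i> * complex_of_real (2*pi * \<phi> g))" for g
  define z where "z g = exp (\<i> * complex_of_real (2*pi * \<theta> g))" for g
  define L where "L = (\<Sum>g\<in>{g\<in>PI. z g = 1}. c g)"
  have lim_exp: "(\<lambda>M. (\<Sum>g\<in>PI. w g * ((\<Sum>m<M. z g ^ m) / of_nat M))) \<longlonglongrightarrow> (\<Sum>g\<in>PI. w g * (if z g = 1 then 1 else 0))"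
    by (intro tendsto_sum tendsto_mult_left cesaro_mean_powers_unit) (simp add: z_def)
  have mean_eq: "(\<Sum>g\<in>PI. w g * ((\<Sum>m<M. z g ^ m) / of_nat M)) =
      complex_of_real ((\<Sum>m<M. \<Prod>i<r. cos (pi * (real m * \<alpha> i - \<beta> i)) ^ (2*K)) / real M)" for M
  proof -
    have "complex_of_real (\<Prod>i<r. cos (pi * (real m * \<alpha> i - \<beta> i)) ^ (2*K)) = (\<Sum>g\<in>PI. w g * z g ^ m)" for m
      unfolding cos_power_product_orbit_expansion PI_def w_def z_def c_def \<theta>_def \<phi>_def
      by (simp add: mult.assoc)
    then show ?thesis
      by (simp add: sum_divide_distrib sum_distrib_left flip: sum.swap[of _ "{..<M}"])
  qed
  text \<open>A frequency surviving the average is an integer relation for \<open>\<alpha>\<close>, hence for \<open>\<beta>\<close>,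
    so its phase is trivial.\<close>
  have "w g = complex_of_real (c g)" if "z g = 1" for g
  proof -
    have "\<theta> g \<in> \<int>"
      using that by (auto simp: z_def exp_eq_1 algebra_simps)
    then have "(\<Sum>i<r. of_int (int (g i) - int K) * \<beta> i) \<in> \<int>"
      by (intro rel) (simp add: \<theta>_def mult.commute)
    then obtain k where "\<phi> g = of_int k"
      by (auto simp: \<phi>_def mult.commute elim: Ints_cases)
    then show ?thesis
      using exp_integer_2pi[of "- of_int k"] by (simp add: w_def mult.commute mult.left_commute)
  qed
  then have lim_eq: "(\<Sum>g\<in>PI. w g * (if z g = 1 then 1 else 0)) = complex_of_real L"
    by (simp add: L_def PI_def sum.inter_filter finite_PiE if_distrib cong: if_cong)
  have lim: "(\<lambda>M. (\<Sum>m<M. \<Prod>i<r. cos (pi * (real m * \<alpha> i - \<beta> i)) ^ (2*K)) / real M) \<longlonglongrightarrow> L"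
    using lim_exp unfolding mean_eq lim_eq tendsto_of_real_iff .
  define g0 where "g0 = restrict (\<lambda>_. K) {..<r}"
  have "g0 \<in> {g\<in>PI. z g = 1}"
    by (simp add: g0_def PI_def z_def \<theta>_def)
  then have "c g0 \<le> L"
    unfolding L_def by (rule member_le_sum) (simp_all add: c_def PI_def prod_nonneg finite_PiE)
  moreover have "(1 / (2 * real K + 1)) ^ r \<le> c g0"
    using central_binomial_lower_bound[of K] by (simp add: c_def g0_def power_mono)
  ultimately show ?thesis
    using that[OF lim] by linarith
qed

lemma cos_power_product_not_uniformly_small:
  fixes \<alpha> \<beta> :: "nat \<Rightarrow> real" and r K :: nat
  assumes rel: "\<And>n::nat \<Rightarrow> int. (\<Sum>i<r. of_int (n i) * \<alpha> i) \<in> \<int> \<Longrightarrow> (\<Sum>i<r. of_int (n i) * \<beta> i) \<in> \<int>"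
    and bound: "\<And>m. (\<Prod>i<r. cos (pi * (real m * \<alpha> i - \<beta> i)) ^ (2*K)) \<le> b"
  shows "(1 / (2 * real K + 1)) ^ r \<le> b"
proof -
  obtain L where lim: "(\<lambda>M. (\<Sum>m<M. \<Prod>i<r. cos (pi * (real m * \<alpha> i - \<beta> i)) ^ (2*K)) / real M) \<longlonglongrightarrow> L"
    and L: "(1 / (2 * real K + 1)) ^ r \<le> L"
    using cos_power_product_mean_tendsto[OF rel] by blast
  have "0 \<le> b"
    by (rule order_trans[OF prod_nonneg bound[of 0]]) (simp add: power_mult)
  have "(\<Sum>m<M. \<Prod>i<r. cos (pi * (real m * \<alpha> i - \<beta> i)) ^ (2*K)) / real M \<le> b" for M
  proof -
    have "(\<Sum>m<M. \<Prod>i<r. cos (pi * (real m * \<alpha> i - \<beta> i)) ^ (2*K)) \<le> (\<Sum>m<M. b)"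
      by (intro sum_mono bound)
    then show ?thesis
      using \<open>0 \<le> b\<close> by (cases "M = 0") (auto simp: field_simps)
  qed
  then have "L \<le> b"
    by (intro LIMSEQ_le_const2[OF lim]) auto
  with L show ?thesis
    by linarith
qed

theorem Kronecker_approx_of_integer_relations:
  fixes \<alpha> \<beta> :: "nat \<Rightarrow> real" and r :: nat
  assumes rel: "\<And>n::nat \<Rightarrow> int. (\<Sum>i<r. of_int (n i) * \<alpha> i) \<in> \<int> \<Longrightarrow> (\<Sum>i<r. of_int (n i) * \<beta> i) \<in> \<int>"
    and "\<epsilon> > 0"
  obtains m :: nat where "\<And>i. i < r \<Longrightarrow> \<exists>z::int. \<bar>real m * \<alpha> i - \<beta> i - of_int z\<bar> < \<epsilon>"
proof (rule ccontr)
  assume no_m: "\<not> thesis"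
  define e where "e = min \<epsilon> (1/2)"
  define \<rho> where "\<rho> = cos (pi * e) ^ 2"
  have e: "0 < e" "e \<le> 1/2" "e \<le> \<epsilon>"
    using \<open>\<epsilon> > 0\<close> by (auto simp: e_def)
  have "0 < pi * e" "pi * e \<le> pi / 2"
    using e by auto
  then have "0 \<le> cos (pi * e)" "cos (pi * e) < cos 0"
    using cos_ge_zero[of "pi * e"] cos_monotone_0_pi[of 0 "pi * e"] pi_gt_zero by linarith+
  then have \<rho>: "0 \<le> \<rho>" "\<rho> < 1"
    by (auto simp: \<rho>_def power_less_one_iff)
  have prod_le: "(\<Prod>i<r. cos (pi * (real m * \<alpha> i - \<beta> i)) ^ (2*K)) \<le> \<rho> ^ K" for K m
  proof -
    have "\<not> (\<forall>i<r. \<exists>z::int. \<bar>real m * \<alpha> i - \<beta> i - of_int z\<bar> < \<epsilon>)"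
      using no_m that by blast
    then obtain i0 where "i0 < r" and "\<And>z::int. \<epsilon> \<le> \<bar>real m * \<alpha> i0 - \<beta> i0 - of_int z\<bar>"
      by (auto simp: not_less)
    then have far: "\<And>z::int. e \<le> \<bar>real m * \<alpha> i0 - \<beta> i0 - of_int z\<bar>"
      using e(3) order_trans by blast
    show ?thesis
      by (rule prod_cos_power_le[OF \<open>i0 < r\<close>]) (use e far in \<open>auto simp: \<rho>_def intro: cos_pi_power2_le_of_dist_Ints\<close>)
  qed
  have one_le: "1 \<le> (2 * real K + 1) ^ r * \<rho> ^ K" for K
  proof -
    have "(2 * real K + 1) ^ r * (1 / (2 * real K + 1)) ^ r \<le> (2 * real K + 1) ^ r * \<rho> ^ K"
      using cos_power_product_not_uniformly_small[OF rel prod_le] by (intro mult_left_mono) auto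
    then show ?thesis
      by (simp add: power_divide)
  qed
  have "\<forall>\<^sub>F K in sequentially. (2 * real K + 1) ^ r * \<rho> ^ K < 1"
    using poly_times_geometric_tendsto_0[OF \<rho>] by (rule order_tendstoD) simp
  then obtain K where "(2 * real K + 1) ^ r * \<rho> ^ K < 1"
    unfolding eventually_sequentially by blast
  with one_le[of K] show False
    by linarith
qed

definition periodic_set :: "real set \<Rightarrow> bool" where
  "periodic_set S \<longleftrightarrow> (\<forall>x. x + 1 \<in> S \<longleftrightarrow> x \<in> S)"

text \<open>For a periodic set this is the Haar measure of its image in \<open>T = \<real>/\<int>\<close>.\<close>

definition circle_measure :: "real set \<Rightarrow> real" where
  "circle_measure S = measure lebesgue (S \<inter> {0..<1})"

definition periodic_extension :: "real set \<Rightarrow> real set" where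
  "periodic_extension A = (\<Union>z\<in>\<int>. (+) z ` A)"

lemma translate_mem_iff [simp]: "x \<in> (+) t ` S \<longleftrightarrow> x - t \<in> S"
  for t :: "'a::ab_group_add"
  unfolding image_iff by (metis add.commute diff_add_cancel add_diff_cancel_left')

lemma periodic_set_add_of_int:
  assumes "periodic_set S"
  shows "x + of_int n \<in> S \<longleftrightarrow> x \<in> S"
proof (induction n arbitrary: x rule: int_induct[where k = 0])
  case (step1 i)
  then show ?case
    using assms[unfolded periodic_set_def, rule_format, of "x + of_int i"] by (simp add: add.assoc)
next
  case (step2 i)
  then show ?case
    using assms[unfolded periodic_set_def, rule_format, of "x + of_int (i - 1)"] by (simp add: algebra_simps)
qed simp

lemma periodic_set_add_Ints: "periodic_set S \<Longrightarrow> z \<in> \<int> \<Longrightarrow> x + z \<in> S \<longleftrightarrow> x \<in> S"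
  by (auto elim!: Ints_cases simp: periodic_set_add_of_int)

lemma translate_add_Ints:
  assumes "periodic_set S" "z \<in> \<int>"
  shows "(+) (t + z) ` S = (+) t ` S"
proof (rule set_eqI)
  fix x
  show "x \<in> (+) (t + z) ` S \<longleftrightarrow> x \<in> (+) t ` S"
    using periodic_set_add_Ints[OF assms(1) Ints_minus[OF assms(2)], of "x - t"] by (simp add: diff_diff_eq)
qed

lemma periodic_set_translate: "periodic_set S \<Longrightarrow> periodic_set ((+) t ` S)"
  unfolding periodic_set_def by (simp add: diff_add_eq[symmetric])

lemma periodic_set_Diff: "periodic_set S \<Longrightarrow> periodic_set T \<Longrightarrow> periodic_set (S - T)"
  by (simp add: periodic_set_def)

lemma circle_measure_nonneg: "0 \<le> circle_measure S"
  by (simp add: circle_measure_def)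

lemma Int_unit_interval_lmeasurable: "S \<in> sets lebesgue \<Longrightarrow> S \<inter> {0..<1::real} \<in> lmeasurable"
  by (intro bounded_set_imp_lmeasurable bounded_subset[OF bounded_Ico]) auto

lemma circle_measure_mono: "S \<subseteq> T \<Longrightarrow> S \<in> sets lebesgue \<Longrightarrow> T \<in> sets lebesgue \<Longrightarrow> circle_measure S \<le> circle_measure T"
  unfolding circle_measure_def
  by (intro measure_mono_fmeasurable Int_unit_interval_lmeasurable) auto

lemma circle_measure_Un:
  assumes "S \<in> sets lebesgue" "T \<in> sets lebesgue" "S \<inter> T = {}"
  shows "circle_measure (S \<union> T) = circle_measure S + circle_measure T"
proof -
  have "(S \<union> T) \<inter> {0..<1} = (S \<inter> {0..<1}) \<union> (T \<inter> {0..<1})" by auto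
  then show ?thesis
    unfolding circle_measure_def using assms
    by (simp add: measure_Un3 Int_unit_interval_lmeasurable Int_Un_distrib2)
      (metis Int_assoc Int_commute Int_empty_left measure_empty inf_left_commute)
qed

lemma circle_measure_Un_le:
  assumes "S \<in> sets lebesgue" "T \<in> sets lebesgue"
  shows "circle_measure (S \<union> T) \<le> circle_measure S + circle_measure T"
  unfolding circle_measure_def Int_Un_distrib2 using assms
  by (intro measure_Un_le) auto

lemma circle_measure_Compl:
  assumes "S \<in> sets lebesgue"
  shows "circle_measure (- S) = 1 - circle_measure S"
  using circle_measure_Un[of S "- S"] assms by (simp add: circle_measure_def Compl_in_sets_lebesgue)

lemma circle_measure_le_1: "S \<in> sets lebesgue \<Longrightarrow> circle_measure S \<le> 1"
  using circle_measure_Compl[of S] circle_measure_nonneg[of "- S"] by simp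

lemma circle_measure_translate:
  assumes per: "periodic_set S" and S: "S \<in> sets lebesgue"
  shows "circle_measure ((+) t ` S) = circle_measure S"
proof -
  define u where "u = frac t"
  have u: "0 \<le> u" "u < 1"
    by (auto simp: u_def frac_lt_1)
  have tu: "(+) t ` S = (+) u ` S"
    using translate_add_Ints[OF per, of "of_int \<lfloor>t\<rfloor>" u] by (simp add: u_def frac_def)
  have per1: "x + 1 - u \<in> S \<longleftrightarrow> x - u \<in> S" for x
    using per[unfolded periodic_set_def, rule_format, of "x - u"] by (simp add: diff_add_eq)
  define S1 where "S1 = S \<inter> {0..<1-u}"
  define S2 where "S2 = S \<inter> {1-u..<1}"
  have S12: "S1 \<in> lmeasurable" "S2 \<in> lmeasurable"
    unfolding S1_def S2_def using S u
    by (auto intro!: bounded_set_imp_lmeasurable bounded_subset[OF bounded_Ico, of _ 0 1])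
  have "(+) u ` S \<inter> {0..<1} = (+) u ` S1 \<union> (+) (u - 1) ` S2"
  proof (intro equalityI subsetI)
    fix x assume "x \<in> (+) u ` S \<inter> {0..<1}"
    then show "x \<in> (+) u ` S1 \<union> (+) (u - 1) ` S2"
      using per1[of x] by (cases "u \<le> x") (auto simp: S1_def S2_def diff_diff_eq2)
  next
    fix x assume "x \<in> (+) u ` S1 \<union> (+) (u - 1) ` S2"
    then show "x \<in> (+) u ` S \<inter> {0..<1}"
      using per1[of x] u by (auto simp: S1_def S2_def diff_diff_eq2)
  qed
  moreover have "(+) u ` S1 \<inter> (+) (u - 1) ` S2 = {}"
    by (auto simp: S1_def S2_def)
  ultimately have "circle_measure ((+) t ` S) = measure lebesgue S1 + measure lebesgue S2"
    unfolding circle_measure_def tu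
    by (simp add: measure_Un3 measurable_translation S12 measure_translation)
  also have "\<dots> = circle_measure S"
  proof -
    have "S \<inter> {0..<1} = S1 \<union> S2" "S1 \<inter> S2 = {}"
      using u by (auto simp: S1_def S2_def)
    then show ?thesis
      by (simp add: circle_measure_def measure_Un3 S12)
  qed
  finally show ?thesis .
qed

lemma periodic_extension_mem_iff: "x \<in> periodic_extension A \<longleftrightarrow> (\<exists>z\<in>\<int>. x - z \<in> A)"
  by (auto simp: periodic_extension_def)

lemma periodic_set_periodic_extension: "periodic_set (periodic_extension A)"
  unfolding periodic_set_def periodic_extension_mem_iff
proof (intro allI iffI)
  fix x assume "\<exists>z\<in>\<int>. x + 1 - z \<in> A"
  then obtain z where "z \<in> \<int>" "x + 1 - z \<in> A"
    by blast
  moreover have "x + 1 - z = x - (z - 1)"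
    by simp
  ultimately show "\<exists>z\<in>\<int>. x - z \<in> A"
    by (metis Ints_1 Ints_diff)
next
  fix x assume "\<exists>z\<in>\<int>. x - z \<in> A"
  then obtain z where "z \<in> \<int>" "x - z \<in> A"
    by blast
  moreover have "x + 1 - (z + 1) = x - z"
    by simp
  ultimately show "\<exists>z\<in>\<int>. x + 1 - z \<in> A"
    by (metis Ints_1 Ints_add)
qed

lemma periodic_extension_in_sets_lebesgue:
  assumes "A \<in> sets lebesgue"
  shows "periodic_extension A \<in> sets lebesgue"
proof -
  have "periodic_extension A = (\<Union>n. (+) (of_int n) ` A)"
    by (auto simp: periodic_extension_def Ints_def)
  also have "\<dots> \<in> sets lebesgue"
    by (rule sets.countable_UN') (auto intro: lebesgue_sets_translation assms)
  finally show ?thesis .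
qed

lemma subset_periodic_extension: "A \<subseteq> periodic_extension A"
  by (auto simp: periodic_extension_mem_iff intro!: bexI[of _ 0])

lemma periodic_extension_Int_unit_interval:
  assumes "A \<subseteq> {0..<1}"
  shows "periodic_extension A \<inter> {0..<1} = A"
proof (intro equalityI subsetI)
  fix x assume x: "x \<in> periodic_extension A \<inter> {0..<1}"
  then obtain z where z: "z \<in> \<int>" "x - z \<in> A"
    by (auto simp: periodic_extension_mem_iff)
  then obtain n where "z = of_int n"
    by (auto elim: Ints_cases)
  moreover have "0 \<le> x - z" "x - z < 1" "0 \<le> x" "x < 1"
    using x z assms by auto
  ultimately have "n = 0"
    by linarith
  then show "x \<in> A"
    using z \<open>z = of_int n\<close> by simp
qed (use assms subset_periodic_extension in auto)

lemma circle_measure_periodic_extension: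
  "A \<subseteq> {0..<1} \<Longrightarrow> circle_measure (periodic_extension A) = measure lebesgue A"
  by (simp add: circle_measure_def periodic_extension_Int_unit_interval)

lemma measure_le_half_if_disjoint_translate:
  assumes A: "A \<in> sets lebesgue" "A \<subseteq> {0..<1}"
    and disj: "periodic_extension A \<inter> (+) a ` periodic_extension A = {}"
  shows "measure lebesgue A \<le> 1/2"
proof -
  define B where "B = periodic_extension A"
  have B: "B \<in> sets lebesgue" "periodic_set B" "(+) a ` B \<in> sets lebesgue"
    using A by (simp_all add: B_def periodic_extension_in_sets_lebesgue
        periodic_set_periodic_extension lebesgue_sets_translation)
  have "2 * measure lebesgue A = circle_measure (B \<union> (+) a ` B)"
    using disj B A by (simp add: circle_measure_Un circle_measure_translate
        circle_measure_periodic_extension B_def)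
  also have "\<dots> \<le> 1"
    using B by (intro circle_measure_le_1) auto
  finally show ?thesis by simp
qed

lemma measure_Int_translate_pos:
  fixes A :: "'a::euclidean_space set"
  assumes A: "A \<in> sets lebesgue" "bounded A" and pos: "0 < measure lebesgue A"
  shows "\<exists>\<delta>>0. \<forall>t. norm t < \<delta> \<longrightarrow> 0 < measure lebesgue (A \<inter> (+) t ` A)"
proof -
  define e where "e = measure lebesgue A / 3"
  have e: "e > 0"
    using pos by (simp add: e_def)
  have small: "measure lebesgue X < e" if "X \<in> lmeasurable" "emeasure lebesgue X < ennreal e" for X
    using that e by (simp add: emeasure_eq_measure2 ennreal_less_iff)
  have Al: "A \<in> lmeasurable"
    using A by (simp add: bounded_set_imp_lmeasurable)
  obtain K where K: "closed K" "K \<subseteq> A" "A - K \<in> lmeasurable" "emeasure lebesgue (A - K) < ennreal e"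
    using sets_lebesgue_inner_closed[OF A(1) e] by blast
  obtain U where U: "open U" "A \<subseteq> U" "U - A \<in> lmeasurable" "emeasure lebesgue (U - A) < ennreal e"
    using sets_lebesgue_outer_open[OF A(1) e] by blast
  have Kc: "compact K"
    using K(1,2) A(2) by (simp add: compact_eq_bounded_closed bounded_subset)
  then have Kl: "K \<in> lmeasurable"
    by (rule lmeasurable_compact)
  obtain \<delta> where \<delta>: "\<delta> > 0" "(\<Union>x\<in>K. ball x \<delta>) \<subseteq> U"
    using compact_subset_open_imp_ball_epsilon_subset[OF Kc U(1)] K(2) U(2) by blast
  have AK: "measure lebesgue A \<le> measure lebesgue K + measure lebesgue (A - K)"
    using measurable_measure_Diff[OF Al _ K(2)] Kl by (simp add: fmeasurableD)
  show ?thesis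
  proof (intro exI[of _ \<delta>] conjI allI impI \<delta>(1))
    fix t :: 'a assume t: "norm t < \<delta>"
    have "(+) t ` K \<subseteq> U"
    proof
      fix x assume "x \<in> (+) t ` K"
      then have "x - t \<in> K"
        by simp
      moreover have "x \<in> ball (x - t) \<delta>"
        using t by (simp add: dist_norm)
      ultimately show "x \<in> U"
        using \<delta>(2) by blast
    qed
    then have "(+) t ` K \<subseteq> (A \<inter> (+) t ` A) \<union> (U - A)"
      using K(2) by auto
    moreover have "(A \<inter> (+) t ` A) \<union> (U - A) \<in> lmeasurable"
      using Al U(3) measurable_translation[OF Al] by (intro fmeasurable.Un fmeasurable.Int)
    ultimately have "measure lebesgue ((+) t ` K) \<le> measure lebesgue ((A \<inter> (+) t ` A) \<union> (U - A))"
      using measurable_translation[OF Kl] by (intro measure_mono_fmeasurable) (auto intro: fmeasurableD)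
    then have "measure lebesgue K \<le> measure lebesgue ((A \<inter> (+) t ` A) \<union> (U - A))"
      by (simp add: measure_translation)
    also have "\<dots> \<le> measure lebesgue (A \<inter> (+) t ` A) + measure lebesgue (U - A)"
      using Al U(3) measurable_translation[OF Al] by (intro measure_Un_le) (auto intro: fmeasurableD)
    finally show "0 < measure lebesgue (A \<inter> (+) t ` A)"
      using AK small[OF K(3,4)] small[OF U(3,4)] e_def pos by linarith
  qed
qed

lemma circle_measure_translate_multiple_Diff:
  assumes B: "periodic_set B" "B \<in> sets lebesgue"
    and null: "circle_measure ((+) s ` B - B) = 0"
  shows "circle_measure ((+) (real k * s) ` B - B) = 0"
proof (induction k)
  case 0
  show ?case
    by (simp add: circle_measure_def)
next
  case (Suc k)
  define D where "D t = (+) t ` B - B" for t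
  have D: "periodic_set (D t)" "D t \<in> sets lebesgue" for t
    unfolding D_def using B
    by (simp_all add: periodic_set_Diff periodic_set_translate lebesgue_sets_translation sets.Diff)
  have "D (real (Suc k) * s) \<subseteq> (+) s ` D (real k * s) \<union> D s"
    by (auto simp: D_def algebra_simps)
  moreover have Ds: "(+) s ` D (real k * s) \<in> sets lebesgue"
    using D(2) by (rule lebesgue_sets_translation)
  ultimately have "circle_measure (D (real (Suc k) * s)) \<le> circle_measure ((+) s ` D (real k * s) \<union> D s)"
    using D by (intro circle_measure_mono sets.Un)
  also have "\<dots> \<le> circle_measure ((+) s ` D (real k * s)) + circle_measure (D s)"
    using D Ds by (intro circle_measure_Un_le)
  also have "\<dots> = 0"
    using Suc null circle_measure_translate[OF D, of s "real k * s"] by (simp add: D_def)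
  finally show ?case
    using circle_measure_nonneg by (simp add: D_def order_antisym)
qed

lemma circle_measure_double_translate_Diff:
  assumes B: "periodic_set B" "B \<in> sets lebesgue" "circle_measure B = 1/2"
    and disj: "B \<inter> (+) a ` B = {}"
  shows "circle_measure ((+) (2 * a) ` B - B) = 0"
proof -
  define C where "C = - (B \<union> (+) a ` B)"
  have Ba: "(+) a ` B \<in> sets lebesgue"
    using B(2) by (rule lebesgue_sets_translation)
  have C: "C \<in> sets lebesgue"
    using B(2) Ba by (simp add: C_def Compl_in_sets_lebesgue)
  have "circle_measure C = 1 - circle_measure (B \<union> (+) a ` B)"
    unfolding C_def using B(2) Ba by (intro circle_measure_Compl sets.Un)
  also have "\<dots> = 1 - (circle_measure B + circle_measure ((+) a ` B))"
    using B(2) Ba disj by (simp add: circle_measure_Un)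
  finally have "circle_measure C = 0"
    using B by (simp add: circle_measure_translate)
  moreover have "(+) (2 * a) ` B - B \<subseteq> C"
  proof
    fix x assume x: "x \<in> (+) (2 * a) ` B - B"
    then have "x - a \<in> (+) a ` B"
      by (simp only: translate_mem_iff Diff_iff) (simp add: algebra_simps)
    with disj have "x \<notin> (+) a ` B"
      by auto
    with x show "x \<in> C"
      by (simp add: C_def)
  qed
  ultimately show ?thesis
    using circle_measure_mono[of _ C] circle_measure_nonneg B C
    by (metis lebesgue_sets_translation sets.Diff order_antisym)
qed

lemma odd_multiple_near_Ints:
  fixes a \<delta> :: real
  assumes "a \<notin> \<rat>" "\<delta> > 0"
  obtains k :: nat and h :: int where "\<bar>(2 * real k + 1) * a - of_int h\<bar> < \<delta>"
proof -
  have "2 * a \<notin> \<rat>"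
    using assms(1) Rats_divide[of "2 * a" 2] by auto
  then obtain h k where "k > 0" "\<bar>of_int k * (2 * a) - of_int h - - a\<bar> < \<delta>"
    using sequence_of_fractional_parts_is_dense[OF _ assms(2)] by blast
  then show ?thesis
    using that[of "nat k" h] by (simp add: algebra_simps)
qed

lemma measure_ne_half_if_disjoint_irrational_translate:
  assumes A: "A \<in> sets lebesgue" "A \<subseteq> {0..<1}"
    and disj: "periodic_extension A \<inter> (+) a ` periodic_extension A = {}"
    and irrational: "a \<notin> \<rat>"
  shows "measure lebesgue A \<noteq> 1/2"
proof
  assume half: "measure lebesgue A = 1/2"
  define B where "B = periodic_extension A"
  have B: "periodic_set B" "B \<in> sets lebesgue" "circle_measure B = 1/2" "A \<subseteq> B"
    using A half by (simp_all add: B_def periodic_set_periodic_extension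
        periodic_extension_in_sets_lebesgue circle_measure_periodic_extension subset_periodic_extension)
  have "bounded A"
    using A(2) by (rule bounded_subset[OF bounded_Ico])
  then obtain \<delta> where "\<delta> > 0" and steinhaus: "\<And>t. norm t < \<delta> \<Longrightarrow> 0 < measure lebesgue (A \<inter> (+) t ` A)"
    using measure_Int_translate_pos[OF A(1)] half by auto
  obtain k h where kh: "\<bar>(2 * real k + 1) * a - of_int h\<bar> < \<delta>"
    using odd_multiple_near_Ints[OF irrational \<open>\<delta> > 0\<close>] .
  define t where "t = (2 * real k + 1) * a - of_int h"
  define D where "D = (+) (real k * (2 * a)) ` B - B"
  have D: "periodic_set D" "D \<in> sets lebesgue" "circle_measure D = 0"
    using B disj circle_measure_translate_multiple_Diff[OF B(1,2) circle_measure_double_translate_Diff]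
    by (simp_all add: D_def B_def periodic_set_Diff periodic_set_translate lebesgue_sets_translation sets.Diff)
  have Bt: "(+) t ` B = (+) (a + real k * (2 * a)) ` B"
    using translate_add_Ints[OF B(1), of "of_int h" t] by (simp add: t_def algebra_simps)
  have "A \<inter> (+) t ` A \<subseteq> (+) a ` D \<inter> {0..<1}"
  proof
    fix x assume x: "x \<in> A \<inter> (+) t ` A"
    then have "x \<in> (+) t ` B" "x \<in> B"
      using B(4) by auto
    then have "x - (a + real k * (2 * a)) \<in> B" "x \<in> B"
      unfolding Bt by simp_all
    moreover have "x - a \<notin> B"
      using disj \<open>x \<in> B\<close> by (auto simp: B_def)
    ultimately have "x - a \<in> D"
      by (simp add: D_def diff_diff_eq)
    then show "x \<in> (+) a ` D \<inter> {0..<1}"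
      using x A(2) by auto
  qed
  then have "measure lebesgue (A \<inter> (+) t ` A) \<le> circle_measure ((+) a ` D)"
    unfolding circle_measure_def using A D(2)
    by (intro measure_mono_fmeasurable Int_unit_interval_lmeasurable lebesgue_sets_translation sets.Int)
  also have "\<dots> = 0"
    using D by (simp add: circle_measure_translate)
  finally show False
    using steinhaus[of t] kh by (simp add: t_def)
qed

lemma mem_scaled_Ico_iff:
  fixes m j :: nat and x c :: real
  assumes "0 < m"
  shows "x \<in> {real j / m ..< (real j + c) / m} \<longleftrightarrow> real j \<le> m * x \<and> m * x < real j + c"
  using assms by (simp add: divide_le_eq less_divide_eq mult.commute)

lemma scaled_Ico_union:
  fixes m :: nat and c :: real
  assumes m: "0 < m" and c: "0 < c" "c \<le> 1"
  defines "A \<equiv> \<Union>j<m. {real j / m ..< (real j + c) / m}"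
  shows "A \<in> sets borel" "A \<subseteq> {0..<1}" "measure lborel A = c"
    and "\<And>x. x \<in> A \<Longrightarrow> frac (real m * x) < c"
proof -
  show "A \<in> sets borel"
    unfolding A_def by (intro sets.finite_UN) auto
  show "A \<subseteq> {0..<1}"
  proof
    fix x assume "x \<in> A"
    then obtain j where "j < m" "real j \<le> m * x" "m * x < real j + c"
      using mem_scaled_Ico_iff[OF m] by (auto simp: A_def)
    moreover have "real j + 1 \<le> real m"
      using \<open>j < m\<close> by linarith
    ultimately have "0 \<le> real m * x" "real m * x < real m * 1"
      using c by linarith+
    then show "x \<in> {0..<1}"
      using m by (simp add: zero_le_mult_iff)
  qed
  show "frac (real m * x) < c" if "x \<in> A" for x
  proof -
    obtain j :: nat where j: "real j \<le> m * x" "m * x < real j + c"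
      using \<open>x \<in> A\<close> mem_scaled_Ico_iff[OF m] by (auto simp: A_def)
    then have "\<lfloor>real m * x\<rfloor> = int j"
      using c by (intro floor_unique) auto
    then show ?thesis
      using j by (simp add: frac_def)
  qed
  have "disjoint_family_on (\<lambda>j. {real j / m ..< (real j + c) / m}) {..<m}"
    unfolding disjoint_family_on_def
  proof (intro ballI impI equals0I)
    fix i j x assume "i \<noteq> j" "x \<in> {real i / m ..< (real i + c) / m} \<inter> {real j / m ..< (real j + c) / m}"
    then have "real i \<le> m * x" "m * x < real i + c" "real j \<le> m * x" "m * x < real j + c"
      using mem_scaled_Ico_iff[OF m] by auto
    with \<open>i \<noteq> j\<close> c show False
      by linarith
  qed
  moreover have "real j / m \<le> (real j + c) / m" for j
    using c by (simp add: divide_right_mono)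
  ultimately have "measure lborel A = (\<Sum>j<m. measure lborel {real j / m ..< (real j + c) / m})"
    unfolding A_def by (intro measure_finite_Union) (auto simp: emeasure_lborel_Ico)
  also have "\<dots> = (\<Sum>j<m. c / m)"
    using c by (intro sum.cong) (auto simp: divide_right_mono diff_divide_distrib[symmetric])
  also have "\<dots> = c"
    using m by simp
  finally show "measure lborel A = c" .
qed

lemma diff_avoids_if_frac_lt:
  assumes frac_lt: "\<And>x. x \<in> A \<Longrightarrow> frac (real m * x) < c"
    and near: "\<And>i. i < r \<Longrightarrow> \<exists>z::int. \<bar>real m * \<alpha> i - 1/2 - of_int z\<bar> < 1/2 - c"
  shows "diff_avoids r \<alpha> A"
  unfolding diff_avoids_def
proof (intro ballI allI impI notI)
  fix x y i assume x: "x \<in> A" and y: "y \<in> A" and "i < r" and "x - y - \<alpha> i \<in> \<int>"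
  then obtain w :: int where w: "x - y - \<alpha> i = of_int w"
    by (auto elim: Ints_cases)
  obtain z :: int where z: "\<bar>real m * \<alpha> i - 1/2 - of_int z\<bar> < 1/2 - c"
    using near[OF \<open>i < r\<close>] by blast
  define N where "N = int m * w + z - \<lfloor>real m * x\<rfloor> + \<lfloor>real m * y\<rfloor>"
  have "real m * x - real m * y = real m * (x - y - \<alpha> i) + real m * \<alpha> i"
    by (simp add: algebra_simps)
  then have "frac (real m * x) - frac (real m * y) = of_int N + 1/2 + (real m * \<alpha> i - 1/2 - of_int z)"
    unfolding frac_def N_def w by (simp add: algebra_simps)
  moreover have "0 \<le> frac (real m * x)" "0 \<le> frac (real m * y)"
    by simp_all
  ultimately have "-1 < real_of_int N" "real_of_int N < 0"
    using frac_lt[OF x] frac_lt[OF y] z by linarith+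
  then have "-1 < N" "N < 0"
    by linarith+
  then show False
    by simp
qed

lemma exists_mult_near_half:
  fixes \<alpha> :: "nat \<Rightarrow> real"
  assumes even: "\<And>n::nat \<Rightarrow> int. (\<Sum>i<r. of_int (n i) * \<alpha> i) \<in> \<int> \<Longrightarrow> even (\<Sum>i<r. n i)"
    and "0 < r" "0 < \<epsilon>" "\<epsilon> \<le> 1/2"
  obtains m :: nat where "0 < m" "\<And>i. i < r \<Longrightarrow> \<exists>z::int. \<bar>real m * \<alpha> i - 1/2 - of_int z\<bar> < \<epsilon>"
proof -
  have "(\<Sum>i<r. of_int (n i) * (1/2 :: real)) \<in> \<int>" if rel: "(\<Sum>i<r. of_int (n i) * \<alpha> i) \<in> \<int>" for n
  proof -
    obtain k where k: "(\<Sum>i<r. n i) = 2 * k"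
      using even[OF rel] by (auto elim!: evenE)
    have "(\<Sum>i<r. of_int (n i) * (1/2 :: real)) = of_int (\<Sum>i<r. n i) / 2"
      by (simp add: sum_divide_distrib)
    then show ?thesis
      by (simp add: k)
  qed
  then obtain m :: nat where m: "\<And>i. i < r \<Longrightarrow> \<exists>z::int. \<bar>real m * \<alpha> i - 1/2 - of_int z\<bar> < \<epsilon>"
    using Kronecker_approx_of_integer_relations[where \<beta>="\<lambda>_. 1/2"] \<open>0 < \<epsilon>\<close> by blast
  moreover have "m \<noteq> 0"
  proof
    assume "m = 0"
    then obtain z :: int where "\<bar>- 1/2 - of_int z\<bar> < \<epsilon>"
      using m[OF \<open>0 < r\<close>] by auto
    then have "-1 < real_of_int z" "real_of_int z < 0"
      using \<open>\<epsilon> \<le> 1/2\<close> by linarith+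
    then have "-1 < z" "z < 0"
      by linarith+
    then show False
      by simp
  qed
  ultimately show ?thesis
    using that by blast
qed

lemma diff_avoids_disjoint_translate:
  assumes "diff_avoids r \<alpha> A" "i < r"
  shows "periodic_extension A \<inter> (+) (\<alpha> i) ` periodic_extension A = {}"
proof (rule equals0I)
  fix x assume "x \<in> periodic_extension A \<inter> (+) (\<alpha> i) ` periodic_extension A"
  then obtain z1 z2 where z: "z1 \<in> \<int>" "z2 \<in> \<int>" "x - z1 \<in> A" "x - \<alpha> i - z2 \<in> A"
    by (auto simp: periodic_extension_mem_iff)
  have "(x - z1) - (x - \<alpha> i - z2) - \<alpha> i = z2 - z1"
    by simp
  then have "(x - z1) - (x - \<alpha> i - z2) - \<alpha> i \<in> \<int>"
    using z(1,2) by simp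
  with assms z(3,4) show False
    unfolding diff_avoids_def by blast
qed

lemma diff_avoids_measure_le_half:
  assumes "i < r" "A \<in> sets borel" "A \<subseteq> {0..<1}" "diff_avoids r \<alpha> A"
  shows "measure lborel A \<le> 1/2"
  using measure_le_half_if_disjoint_translate[OF _ assms(3) diff_avoids_disjoint_translate[OF assms(4,1)]]
    assms(2) by (simp add: sets_completionI_sets)

lemma Md_T_le_half:
  assumes "0 < r"
  shows "Md_T r \<alpha> \<le> 1/2"
  unfolding Md_T_def
proof (rule cSup_least)
  show "{measure lborel A | A. A \<in> sets borel \<and> A \<subseteq> {0..<1} \<and> diff_avoids r \<alpha> A} \<noteq> {}"
    by (auto simp: diff_avoids_def intro!: exI[of _ "{}"])
qed (use assms diff_avoids_measure_le_half in blast)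

lemma measure_le_Md_T:
  assumes "0 < r" "A \<in> sets borel" "A \<subseteq> {0..<1}" "diff_avoids r \<alpha> A"
  shows "measure lborel A \<le> Md_T r \<alpha>"
  unfolding Md_T_def
proof (rule cSup_upper)
  show "bdd_above {measure lborel A | A. A \<in> sets borel \<and> A \<subseteq> {0..<1} \<and> diff_avoids r \<alpha> A}"
    using diff_avoids_measure_le_half \<open>0 < r\<close> by (auto intro!: bdd_aboveI[of _ "1/2"])
qed (use assms in blast)

lemma Md_T_ge_half:
  assumes even: "\<And>n::nat \<Rightarrow> int. (\<Sum>i<r. of_int (n i) * \<alpha> i) \<in> \<int> \<Longrightarrow> even (\<Sum>i<r. n i)"
    and "0 < r"
  shows "1/2 \<le> Md_T r \<alpha>"
proof (rule field_le_epsilon)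
  fix \<epsilon> :: real assume "0 < \<epsilon>"
  define e where "e = min \<epsilon> (1/4)"
  have e: "0 < e" "e \<le> 1/4" "e \<le> \<epsilon>"
    using \<open>0 < \<epsilon>\<close> by (auto simp: e_def)
  obtain m :: nat where "0 < m" and near: "\<And>i. i < r \<Longrightarrow> \<exists>z::int. \<bar>real m * \<alpha> i - 1/2 - of_int z\<bar> < e"
    by (rule exists_mult_near_half[OF even \<open>0 < r\<close> e(1)]) (use e in auto)
  have c: "0 < 1/2 - e" "1/2 - e \<le> 1"
    using e by auto
  define A where "A = (\<Union>j<m. {real j / m ..< (real j + (1/2 - e)) / m})"
  note A = scaled_Ico_union[OF \<open>0 < m\<close> c, folded A_def]
  have "diff_avoids r \<alpha> A"
    by (rule diff_avoids_if_frac_lt[OF A(4)]) (use near in auto)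
  then have "1/2 - e \<le> Md_T r \<alpha>"
    using measure_le_Md_T[OF \<open>0 < r\<close> A(1,2)] A(3) by simp
  then show "1/2 \<le> Md_T r \<alpha> + \<epsilon>"
    using e(3) by linarith
qed

lemma even_sum_gen_subgroup:
  assumes "n \<in> gen_subgroup G" "\<forall>g\<in>G. even (\<Sum>i<r. g i)"
  shows "even (\<Sum>i<r. n i)"
  using assms(1) by (induction rule: gen_subgroup.induct) (use assms(2) in \<open>auto simp: sum_subtractf\<close>)

lemma even_sum_of_integer_relation:
  assumes "gen_subgroup G = Lambda r \<alpha>" "\<forall>g\<in>G. even (\<Sum>i<r. g i)"
    and "(\<Sum>i<r. of_int (n i) * \<alpha> i) \<in> \<int>"
  shows "even (\<Sum>i<r. n i)"
proof -
  define n' where "n' i = (if i < r then n i else 0)" for i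
  have "n' \<in> Lambda r \<alpha>"
    using assms(3) by (simp add: Lambda_def n'_def)
  then have "even (\<Sum>i<r. n' i)"
    using assms(1,2) even_sum_gen_subgroup by blast
  then show ?thesis
    by (simp add: n'_def)
qed

theorem mainTheorem14:
  fixes r :: nat and \<alpha> :: "nat \<Rightarrow> real"
  assumes "r \<ge> 1"
    and "\<exists>G. gen_subgroup G = Lambda r \<alpha> \<and> (\<forall>g\<in>G. even (\<Sum>i<r. g i))"
  shows "Md_T r \<alpha> = 1/2 \<and>
    ((\<exists>i<r. \<alpha> i \<notin> \<rat>) \<longrightarrow>
      \<not> (\<exists>A. A \<in> sets borel \<and> A \<subseteq> {0..<1} \<and> diff_avoids r \<alpha> A \<and> measure lborel A = 1/2))"
proof (intro conjI impI notI)
  have r: "0 < r"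
    using assms(1) by simp
  obtain G where "gen_subgroup G = Lambda r \<alpha>" "\<forall>g\<in>G. even (\<Sum>i<r. g i)"
    using assms(2) by blast
  then have "\<And>n. (\<Sum>i<r. of_int (n i) * \<alpha> i) \<in> \<int> \<Longrightarrow> even (\<Sum>i<r. n i)"
    by (rule even_sum_of_integer_relation)
  then show "Md_T r \<alpha> = 1/2"
    using Md_T_le_half[OF r] Md_T_ge_half[OF _ r] by (simp add: order_antisym)
next
  assume "\<exists>i<r. \<alpha> i \<notin> \<rat>" "\<exists>A. A \<in> sets borel \<and> A \<subseteq> {0..<1} \<and> diff_avoids r \<alpha> A \<and> measure lborel A = 1/2"
  then obtain i A where "i < r" "\<alpha> i \<notin> \<rat>" and A: "A \<in> sets borel" "A \<subseteq> {0..<1}" "diff_avoids r \<alpha> A"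
    and "measure lborel A = 1/2"
    by blast
  with measure_ne_half_if_disjoint_irrational_translate[OF _ A(2) diff_avoids_disjoint_translate]
  show False
    by (simp add: sets_completionI_sets)
qed

end
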